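(* Let $i,j\in\mathbb Z^{\geq 0}$. Then for all $n\in\mathbb N$: (i) $f_{i,j}(n)+1=f_{i,j-1}(n)$; (ii) $f_{i+1,j}(n)+1=f_{i+1,j-1}(n)$; (iii) $f_{i,0}(a(n))+1=f_{i+1,F(i+1)-1}(n)$; (iv) $f_{i,0}(b(n))+1=f_{i,F(i+2)-1}(b(n)+1)$; (v) $f_{i+1,0}(n)+1=f_{i,F(i+2)-1}(a(n)+1)$.
   Context: $\mathbb N=\{1,2,\dots\}$, $\varphi=\frac{1+\sqrt5}{2}$, $a(n)=\lfloor n\varphi\rfloor$, $b(n)=\lfloor n\varphi^2\rfloor$. $F$ is the Fibonacci sequence with $F(0)=0$, $F(1)=F(2)=1$, $F(n)=F(n-1)+F(n-2)$. For $i\in\mathbb Z^{\geq 0}$, $j\in\mathbb Z$, $f_{i,j}(n)=F(i+1)a(n)+F(i)n-j$ for $n\in\mathbb N$. *)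

theory Defs
  imports Complex_Main
begin

definition phi :: real where "phi = (1 + sqrt 5) / 2"

definition a :: "nat \<Rightarrow> nat" where "a n = nat \<lfloor>real n * phi\<rfloor>"
definition b :: "nat \<Rightarrow> nat" where "b n = nat \<lfloor>real n * phi ^ 2\<rfloor>"

fun F :: "nat \<Rightarrow> int" where
  "F 0 = 0" | "F (Suc 0) = 1" | "F (Suc (Suc n)) = F (Suc n) + F n"

definition f :: "nat \<Rightarrow> int \<Rightarrow> nat \<Rightarrow> int" where
  "f i j n = F (i + 1) * int (a n) + F i * int n - j"

end

theory Submission
  imports Defs "HOL-Computational_Algebra.Primes"
begin

(* Unfolding f and using F (i + 2) = F (i + 1) + F i, parts (iii)-(v) reduce to the
   Wythoff identities b n = a n + n, a (a n) = b n - 1, a (a n + 1) = b n + 1 and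
   a (b n + 1) = a (b n) + 1.  Writing a n = n phi - x with x the fractional part of n phi,
   phi^2 = phi + 1 gives a n * phi = a n + n - (phi - 1) x, so each identity amounts to
   bounding a small multiple of x; only a (a n) needs x > 0, i.e. the irrationality of phi. *)

lemma square_eq_prime_elem_mult_square:
  fixes p m n :: "'a :: factorial_semiring"
  assumes "prime_elem p" and "m ^ 2 = p * n ^ 2"
  shows "n = 0"
proof (rule ccontr)
  assume "n \<noteq> 0"
  with assms have "m \<noteq> 0" by auto
  have "multiplicity p (m ^ 2) = 2 * multiplicity p m"
    using assms(1) \<open>m \<noteq> 0\<close> by (rule prime_elem_multiplicity_power_distrib)
  moreover have "multiplicity p (p * n ^ 2) = 1 + 2 * multiplicity p n"
    using assms(1) \<open>n \<noteq> 0\<close>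
    by (simp add: prime_elem_multiplicity_mult_distrib prime_elem_multiplicity_power_distrib
        multiplicity_self prime_elem_def)
  ultimately have "2 * multiplicity p m = 1 + 2 * multiplicity p n"
    using assms(2) by simp
  then show False by presburger
qed

lemma phi_squared: "phi ^ 2 = phi + 1"
  unfolding phi_def by (simp add: power2_eq_square field_simps)

lemma phi_gt_one: "1 < phi" and phi_less_two: "phi < 2"
proof -
  have "2 < sqrt 5" by (rule real_less_rsqrt) simp
  moreover have "sqrt 5 < 3" by (rule real_sqrt_less_mono[of 5 9, simplified])
  ultimately show "1 < phi" "phi < 2" unfolding phi_def by auto
qed

lemma of_nat_mult_phi_notin_Ints:
  assumes "n \<ge> 1" shows "real n * phi \<notin> \<int>"
proof
  assume "real n * phi \<in> \<int>"
  then obtain k where "real n * phi = of_int k" by (auto elim: Ints_cases)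
  then have "real n * sqrt 5 = of_int (2 * k - int n)"
    unfolding phi_def by (simp add: field_simps)
  then have "real_of_int ((2 * k - int n) ^ 2) = of_int (5 * int n ^ 2)"
    by (metis of_int_power of_int_mult of_int_numeral of_int_of_nat_eq power_mult_distrib
        real_sqrt_pow2 zero_le_numeral mult.commute)
  then have "(2 * k - int n) ^ 2 = 5 * int n ^ 2" by (simp only: of_int_eq_iff)
  moreover have "prime (5 :: int)" by code_simp
  ultimately have "int n = 0" using square_eq_prime_elem_mult_square by blast
  with assms show False by simp
qed

lemma a_eq_iff: "a m = k \<longleftrightarrow> real k \<le> real m * phi \<and> real m * phi < real k + 1"
  unfolding a_def using phi_gt_one by (auto simp: nat_eq_iff floor_eq_iff)

lemma of_nat_a: "real (a n) = real n * phi - frac (real n * phi)"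
  unfolding a_def frac_def using phi_gt_one by simp

lemma of_nat_a_mult_phi:
  "real (a n) * phi = real (a n) + real n - (phi - 1) * frac (real n * phi)"
proof -
  have "real (a n) * phi = real n * phi ^ 2 - frac (real n * phi) * phi"
    by (simp add: of_nat_a power2_eq_square algebra_simps)
  also have "\<dots> = real (a n) + real n - (phi - 1) * frac (real n * phi)"
    by (simp add: phi_squared of_nat_a algebra_simps)
  finally show ?thesis .
qed

lemma b_eq_a_plus: "b n = a n + n"
proof -
  have "real n * phi ^ 2 = real n * phi + of_int (int n)"
    by (simp add: phi_squared distrib_left)
  then have "\<lfloor>real n * phi ^ 2\<rfloor> = \<lfloor>real n * phi\<rfloor> + int n"
    by (simp only: floor_add_int)
  then show ?thesis
    unfolding a_def b_def using phi_gt_one by (simp add: nat_add_distrib)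
qed

lemma a_a:
  assumes "n \<ge> 1" shows "a (a n) + 1 = a n + n"
proof -
  define x where "x = frac (real n * phi)"
  have "0 < x" "x \<le> 1"
    using of_nat_mult_phi_notin_Ints[OF assms] unfolding x_def by (auto simp: frac_lt_1 less_imp_le)
  then have "0 < (phi - 1) * x" "(phi - 1) * x \<le> phi - 1"
    using phi_gt_one by (auto intro: mult_left_le)
  then have "a (a n) = a n + n - 1"
    using assms phi_less_two by (simp add: a_eq_iff of_nat_a_mult_phi flip: x_def)
  then show ?thesis using assms by simp
qed

lemma a_Suc_a: "a (a n + 1) = a n + n + 1"
proof -
  define x where "x = frac (real n * phi)"
  have "0 \<le> 1 - x" "1 - x \<le> 1" unfolding x_def by (auto simp: frac_lt_1 less_imp_le)
  then have "0 \<le> (phi - 1) * (1 - x)" "(phi - 1) * (1 - x) \<le> phi - 1"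
    using phi_gt_one by (auto intro: mult_left_le)
  moreover have "real (a n + 1) * phi = real (a n + n + 1) + (phi - 1) * (1 - x)"
    by (simp add: distrib_right of_nat_a_mult_phi flip: x_def) (simp add: algebra_simps)
  ultimately show ?thesis using phi_less_two by (simp add: a_eq_iff)
qed

lemma a_b: "a (b n) = a n + b n" and a_Suc_b: "a (b n + 1) = a n + b n + 1"
proof -
  define x where "x = frac (real n * phi)"
  have "real n * phi = real (a n) + x" by (simp add: of_nat_a x_def)
  moreover have "real (a n) * phi = real (a n) + real n - (phi - 1) * x"
    by (simp add: of_nat_a_mult_phi x_def)
  ultimately have "real (b n) * phi = real (a n + b n) + (2 - phi) * x"
    by (simp add: b_eq_a_plus algebra_simps)
  moreover have "0 \<le> (2 - phi) * x" "(2 - phi) * x < 2 - phi"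
    using phi_less_two unfolding x_def by (auto simp: frac_lt_1)
  ultimately show "a (b n) = a n + b n" "a (b n + 1) = a n + b n + 1"
    using phi_gt_one by (simp_all add: a_eq_iff distrib_right)
qed

theorem proposition3p5:
  fixes i :: nat and j :: int and n :: nat
  assumes "j \<ge> 0" and "n \<ge> 1"
  shows "f i j n + 1 = f i (j - 1) n
    \<and> f (i + 1) j n + 1 = f (i + 1) (j - 1) n
    \<and> f i 0 (a n) + 1 = f (i + 1) (F (i + 1) - 1) n
    \<and> f i 0 (b n) + 1 = f i (F (i + 2) - 1) (b n + 1)
    \<and> f (i + 1) 0 n + 1 = f i (F (i + 2) - 1) (a n + 1)"
proof -
  \<comment> \<open>Parts (i) and (ii) are identities of the definition.\<close>
  have F_add_two: "F (i + 2) = F (i + 1) + F i"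
    by (simp add: numeral_2_eq_2)
  have a_a_int: "int (a (a n)) = int (a n) + int n - 1"
    using a_a[OF assms(2)] by linarith
  have a_Suc_a_int: "int (a (a n + 1)) = int (a n) + int n + 1"
    using a_Suc_a by simp
  have a_Suc_b_int: "int (a (b n + 1)) = int (a (b n)) + 1"
    using a_b a_Suc_b by simp
  show ?thesis
    unfolding f_def F_add_two a_a_int a_Suc_a_int a_Suc_b_int by (simp add: algebra_simps)
qed

end
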